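(* Assume $(\mu,\vec w_1,\vec w_2)$ is a perfect combination and let $g=S^{-1}\bar S$ be the Gauss–Borel factorization of its moment matrix. Define, for $l\ge0$, $A^{(l)}_a(x)=\sum_{i\le l,\ a_1(i)=a}S_{l,i}x^{k_1(i)}$ ($a=1,\dots,p_1$) and $\bar A^{(l)}_b(x)=\sum_{j\le l,\ a_2(j)=b}x^{k_2(j)}\bar S'_{j,l}$ ($b=1,\dots,p_2$), where $\bar S'=\bar S^{-1}$. Then: (i) $(A^{(l)}_1,\dots,A^{(l)}_{p_1})$ is the unique tuple of polynomials with $\deg A^{(l)}_a\le\nu_{1,a}(l)-1$, with $A^{(l)}_{a_1(l)}$ monic of degree $\nu_{1,a_1(l)}(l)-1$, and $$\int\Big(\sum_{a=1}^{p_1}A^{(l)}_a(x)w_{1,a}(x)\Big)w_{2,b}(x)x^k\,d\mu(x)=0,\qquad 0\le k\le\nu_{2,b}(l-1)-1,\ b=1,\dots,p_2;$$ i.e. it is the mixed multiple orthogonal polynomial system with degree vectors $[\vec\nu_1(l);\vec\nu_2(l-1)]$ and type II normalization in the component $a_1(l)$. (ii) $(\bar A^{(l)}_1,\dots,\bar A^{(l)}_{p_2})$ is the unique tuple of polynomials with $\deg\bar A^{(l)}_b\le\nu_{2,b}(l)-1$ such that $$\int\Big(\sum_{b=1}^{p_2}\bar A^{(l)}_b(x)w_{2,b}(x)\Big)w_{1,a}(x)x^k\,d\mu(x)=0,\qquad 0\le k\le\nu_{1,a}(l-1)-1,\ a=1,\dots,p_1,$$ and $\int\big(\sum_{b}\bar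 A^{(l)}_b(x)w_{2,b}(x)\big)w_{1,a_1(l)}(x)x^{\nu_{1,a_1(l)}(l-1)}d\mu(x)=1$; i.e. it is the mixed multiple orthogonal system with degree vectors $[\vec\nu_2(l);\vec\nu_1(l-1)]$ and type I normalization with respect to $a_1(l)$.
   Context: Let $\mu$ be a finite Borel measure on an interval $\Delta\subset\mathbb R$ with infinitely many points in its support, not changing sign, and $w_{1,a}$ ($a=1,\dots,p_1$), $w_{2,b}$ ($b=1,\dots,p_2$) real integrable functions on $\Delta$ not changing sign (all integrals finite). Compositions $\vec n_\ell=(n_{\ell,1},\dots,n_{\ell,p_\ell})\in\mathbb N^{p_\ell}$, $\ell=1,2$, are fixed. Each $i\in\mathbb Z_+$ is uniquely $i=q|\vec n_\ell|+n_{\ell,1}+\dots+n_{\ell,a-1}+r$, $0\le r<n_{\ell,a}$; put $a_\ell(i)=a$, $k_\ell(i)=qn_{\ell,a}+r$. The moment matrix is $g=(g_{i,j})_{i,j\ge0}$, $g_{i,j}=\int x^{k_1(i)+k_2(j)}w_{1,a_1(i)}(x)w_{2,a_2(j)}(x)\,d\mu(x)$. Degree vectors: $\nu_{\ell,a}(i)=\#\{0\le j\le i:a_\ell(j)=a\}$ (so $|\vec\nu_\ell(i)|=i+1$), $\vec\nu_\ell(-1)=0$. The combination $(\mu,\vec w_1,\vec w_2)$ is perfect if for all $\vec\nu_1\in\mathbb Z_+^{p_1}$, $\vec\nu_2\in\mathbb Z_+^{p_2}$ with $|\vec\nu_1|=|\vec\nu_2|+1$, any polynomials $A_1,\dots,A_{p_1}$,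 not all zero, with $\deg A_a\le\nu_{1,a}-1$ and $\int\sum_aA_aw_{1,a}w_{2,b}x^jd\mu=0$ for $j=0,\dots,\nu_{2,b}-1$, $b=1,\dots,p_2$, satisfy $\deg A_a=\nu_{1,a}-1$ for all $a$. For a perfect combination all $\det g^{[l]}\neq0$, $g^{[l]}=(g_{i,j})_{0\le i,j<l}$, and the Gauss–Borel factorization $g=S^{-1}\bar S$ exists uniquely, with $S$ lower triangular with unit diagonal and $\bar S$ upper triangular with nonzero diagonal (semi-infinite matrices). *)

theory Defs
  imports "HOL-Analysis.Analysis" "HOL-Computational_Algebra.Polynomial"
begin

text \<open>A composition is a nonempty list of positive naturals; its entries are
  indexed 1..length. blk n i is the block index a(i) (in 1..p), kexp n i is k(i).\<close>

definition composition :: "nat list \<Rightarrow> bool" where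
  "composition n \<longleftrightarrow> n \<noteq> [] \<and> (\<forall>x\<in>set n. 0 < x)"

definition blk :: "nat list \<Rightarrow> nat \<Rightarrow> nat" where
  "blk n i = (LEAST a. i mod sum_list n < sum_list (take a n))"

definition kexp :: "nat list \<Rightarrow> nat \<Rightarrow> nat" where
  "kexp n i = (i div sum_list n) * (n ! (blk n i - 1))
              + (i mod sum_list n - sum_list (take (blk n i - 1) n))"

text \<open>nuc n a m = #{0 \<le> j < m. a(j) = a}; hence nu_a(i) = nuc n a (i+1) and
  nu_a(-1) = nuc n a 0 = 0.\<close>
definition nuc :: "nat list \<Rightarrow> nat \<Rightarrow> nat \<Rightarrow> nat" where
  "nuc n a m = card {j. j < m \<and> blk n j = a}"

definition moment :: "real measure \<Rightarrow> nat list \<Rightarrow> nat list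
    \<Rightarrow> (nat \<Rightarrow> real \<Rightarrow> real) \<Rightarrow> (nat \<Rightarrow> real \<Rightarrow> real) \<Rightarrow> nat \<Rightarrow> nat \<Rightarrow> real" where
  "moment M n1 n2 w1 w2 i j =
     (\<integral>x. x ^ (kexp n1 i + kexp n2 j) * w1 (blk n1 i) x * w2 (blk n2 j) x \<partial>M)"

text \<open>deg A \<le> m - 1 (with deg 0 = -infinity) and deg A = m - 1.\<close>
definition deg_le :: "real poly \<Rightarrow> nat \<Rightarrow> bool" where
  "deg_le A m \<longleftrightarrow> A = 0 \<or> degree A + 1 \<le> m"

definition deg_eq :: "real poly \<Rightarrow> nat \<Rightarrow> bool" where
  "deg_eq A m \<longleftrightarrow> (if m = 0 then A = 0 else A \<noteq> 0 \<and> degree A = m - 1)"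

definition perfect :: "real measure \<Rightarrow> nat \<Rightarrow> nat \<Rightarrow> (nat \<Rightarrow> real \<Rightarrow> real)
    \<Rightarrow> (nat \<Rightarrow> real \<Rightarrow> real) \<Rightarrow> bool" where
  "perfect M p1 p2 w1 w2 \<longleftrightarrow>
     (\<forall>\<nu>1 \<nu>2 :: nat \<Rightarrow> nat. (\<Sum>a=1..p1. \<nu>1 a) = (\<Sum>b=1..p2. \<nu>2 b) + 1 \<longrightarrow>
       (\<forall>A :: nat \<Rightarrow> real poly.
          (\<exists>a\<in>{1..p1}. A a \<noteq> 0)
          \<and> (\<forall>a\<in>{1..p1}. deg_le (A a) (\<nu>1 a))
          \<and> (\<forall>b\<in>{1..p2}. \<forall>j<\<nu>2 b.
                (\<integral>x. (\<Sum>a=1..p1. poly (A a) x * w1 a x) * w2 b x * x ^ j \<partial>M) = 0)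
          \<longrightarrow> (\<forall>a\<in>{1..p1}. deg_eq (A a) (\<nu>1 a))))"

definition measure_support :: "real measure \<Rightarrow> real set" where
  "measure_support M = {x. \<forall>e>0. emeasure M (ball x e) \<noteq> 0}"

definition not_changing_sign :: "real set \<Rightarrow> (real \<Rightarrow> real) \<Rightarrow> bool" where
  "not_changing_sign D f \<longleftrightarrow> (\<forall>x\<in>D. 0 \<le> f x) \<or> (\<forall>x\<in>D. f x \<le> 0)"

definition typeII_sys :: "real measure \<Rightarrow> nat list \<Rightarrow> nat list
    \<Rightarrow> (nat \<Rightarrow> real \<Rightarrow> real) \<Rightarrow> (nat \<Rightarrow> real \<Rightarrow> real) \<Rightarrow> nat \<Rightarrow> (nat \<Rightarrow> real poly) \<Rightarrow> bool" where
  "typeII_sys M n1 n2 w1 w2 l A \<longleftrightarrow>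
     (\<forall>a\<in>{1..length n1}. deg_le (A a) (nuc n1 a (Suc l)))
     \<and> degree (A (blk n1 l)) = nuc n1 (blk n1 l) (Suc l) - 1
     \<and> lead_coeff (A (blk n1 l)) = 1
     \<and> (\<forall>b\<in>{1..length n2}. \<forall>k < nuc n2 b l.
          (\<integral>x. (\<Sum>a=1..length n1. poly (A a) x * w1 a x) * w2 b x * x ^ k \<partial>M) = 0)"

definition typeI_sys :: "real measure \<Rightarrow> nat list \<Rightarrow> nat list
    \<Rightarrow> (nat \<Rightarrow> real \<Rightarrow> real) \<Rightarrow> (nat \<Rightarrow> real \<Rightarrow> real) \<Rightarrow> nat \<Rightarrow> (nat \<Rightarrow> real poly) \<Rightarrow> bool" where
  "typeI_sys M n1 n2 w1 w2 l B \<longleftrightarrow>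
     (\<forall>b\<in>{1..length n2}. deg_le (B b) (nuc n2 b (Suc l)))
     \<and> (\<forall>a\<in>{1..length n1}. \<forall>k < nuc n1 a l.
          (\<integral>x. (\<Sum>b=1..length n2. poly (B b) x * w2 b x) * w1 a x * x ^ k \<partial>M) = 0)
     \<and> (\<integral>x. (\<Sum>b=1..length n2. poly (B b) x * w2 b x) * w1 (blk n1 l) x
            * x ^ (nuc n1 (blk n1 l) l) \<partial>M) = 1"

end

theory Submission
  imports Defs
begin

text \<open>A tuple $(A_a)$ with $\deg A_a \le \nu_{1,a}(l)-1$ is the same thing as a coefficient
  vector $(d_i)_{i\le l}$, the index $i$ carrying the coefficient of $x^{k_1(i)}$ in $A_{a_1(i)}$.
  In these coordinates the type II conditions say that $d_l = 1$ and that $d\,g$ vanishes in the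
  columns $j<l$, and the type I conditions say that $g\,c$ is the $l$-th unit vector in the rows
  $i\le l$. Since $S g = \bar S$ is upper triangular, row $l$ of $S$ solves the first system;
  since $g \bar S^{-1} = S^{-1}$ is lower unitriangular, column $l$ of $\bar S^{-1}$ solves the
  second; and triangularity also gives uniqueness. Perfectness is what makes the factorization
  exist.\<close>

abbreviation prefix_sum :: "nat list \<Rightarrow> nat \<Rightarrow> nat" where
  "prefix_sum n a \<equiv> sum_list (take a n)"

lemma prefix_sum_Suc: "a < length n \<Longrightarrow> prefix_sum n (Suc a) = prefix_sum n a + n ! a"
  by (simp add: take_Suc_conv_app_nth)

lemma prefix_sum_mono: "a \<le> b \<Longrightarrow> prefix_sum n a \<le> prefix_sum n b"
  by (metis le_Suc_ex le_add1 sum_list_append take_add)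

lemma composition_sum_pos: "composition n \<Longrightarrow> 0 < sum_list n"
  unfolding composition_def by (cases n) auto

lemma composition_nth_pos: "composition n \<Longrightarrow> a < length n \<Longrightarrow> 0 < n ! a"
  unfolding composition_def by auto

lemma blk_bounds:
  assumes "composition n"
  shows "1 \<le> blk n i" "blk n i \<le> length n"
    and "prefix_sum n (blk n i - 1) \<le> i mod sum_list n" "i mod sum_list n < prefix_sum n (blk n i)"
proof -
  let ?r = "i mod sum_list n"
  have ex: "?r < prefix_sum n (length n)"
    using composition_sum_pos[OF assms] by simp
  show lt: "?r < prefix_sum n (blk n i)"
    unfolding blk_def by (rule LeastI[of _ "length n"]) (rule ex)
  show "blk n i \<le> length n"
    unfolding blk_def by (rule Least_le) (rule ex)
  show ge: "1 \<le> blk n i"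
    using lt by (cases "blk n i") auto
  have "\<not> ?r < prefix_sum n (blk n i - 1)"
    using Least_le[of "\<lambda>a. ?r < prefix_sum n a" "blk n i - 1"] ge by (auto simp: blk_def)
  then show "prefix_sum n (blk n i - 1) \<le> ?r" by simp
qed

lemma blk_eqI:
  assumes "1 \<le> a"
    and "prefix_sum n (a - 1) \<le> i mod sum_list n" "i mod sum_list n < prefix_sum n a"
  shows "blk n i = a"
  unfolding blk_def
proof (rule Least_equality)
  fix a' assume a': "i mod sum_list n < prefix_sum n a'"
  show "a \<le> a'"
  proof (rule ccontr)
    assume "\<not> a \<le> a'"
    then have "prefix_sum n a' \<le> prefix_sum n (a - 1)" by (intro prefix_sum_mono) simp
    then show False using assms a' by simp
  qed
qed fact

lemma blk_in_range: "composition n \<Longrightarrow> blk n i \<in> {1..length n}"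
  using blk_bounds by auto

lemma nuc_0 [simp]: "nuc n a 0 = 0"
  unfolding nuc_def by simp

lemma nuc_Suc: "nuc n a (Suc i) = nuc n a i + (if blk n i = a then 1 else 0)"
proof -
  have "{j. j < Suc i \<and> blk n j = a} =
      (if blk n i = a then insert i {j. j < i \<and> blk n j = a} else {j. j < i \<and> blk n j = a})"
    by (auto simp: less_Suc_eq)
  then show ?thesis unfolding nuc_def by auto
qed

lemma nuc_mono: "i \<le> m \<Longrightarrow> nuc n a i \<le> nuc n a m"
  unfolding nuc_def by (rule card_mono) auto

text \<open>Every complete period of length $|\vec n|$ contributes $n_a$ indices of block $a$, and the
  incomplete period contributes its overlap with the block $[\,n_1+\dots+n_{a-1},\ n_1+\dots+n_a)$.\<close>
definition block_count :: "nat list \<Rightarrow> nat \<Rightarrow> nat \<Rightarrow> nat" where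
  "block_count n a i = (i div sum_list n) * (n ! (a - 1))
     + min (n ! (a - 1)) (i mod sum_list n - prefix_sum n (a - 1))"

lemma block_count_Suc:
  assumes c: "composition n" and a: "a \<in> {1..length n}"
  shows "block_count n a (Suc i) = block_count n a i + (if blk n i = a then 1 else 0)"
proof -
  define N where "N = sum_list n"
  define q where "q = i div N"
  define r where "r = i mod N"
  define s where "s = prefix_sum n (a - 1)"
  define m where "m = n ! (a - 1)"
  have N: "0 < N" and r: "r < N"
    using composition_sum_pos[OF c] by (simp_all add: N_def r_def)
  have m: "0 < m" using composition_nth_pos[OF c, of "a - 1"] a by (auto simp: m_def)
  have block_end: "prefix_sum n a = s + m"
    using prefix_sum_Suc[of "a - 1" n] a by (auto simp: s_def m_def)
  then have sm: "s + m \<le> N"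
    using prefix_sum_mono[of a "length n" n] a by (simp add: N_def)
  have in_block: "blk n i = a \<longleftrightarrow> s \<le> r \<and> r < s + m"
    using blk_bounds[OF c, of i] blk_eqI[of a n i] a block_end
    unfolding s_def r_def N_def by auto
  have count_i: "block_count n a i = q * m + min m (r - s)"
    unfolding block_count_def q_def r_def s_def m_def N_def by simp
  have count_Suc: "block_count n a (Suc i) = (Suc i div N) * m + min m (Suc i mod N - s)"
    unfolding block_count_def s_def m_def N_def by simp
  show ?thesis
  proof (cases "Suc r < N")
    case True
    then have "Suc i div N = q" "Suc i mod N = Suc r"
      using r by (simp_all add: q_def r_def N_def div_Suc mod_Suc)
    then show ?thesis
      using in_block unfolding count_i count_Suc by (auto simp: min_def)
  next
    case False
    then have "Suc r = N" using r by simp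
    then have "Suc i div N = Suc q" "Suc i mod N = 0"
      using N by (simp_all add: q_def r_def div_Suc mod_Suc)
    then show ?thesis
      using in_block \<open>Suc r = N\<close> sm m unfolding count_i count_Suc by (auto simp: min_def)
  qed
qed

lemma nuc_eq_block_count: "composition n \<Longrightarrow> a \<in> {1..length n} \<Longrightarrow> nuc n a i = block_count n a i"
proof (induction i)
  case (Suc i)
  then show ?case by (simp add: nuc_Suc block_count_Suc)
qed (simp add: block_count_def)

lemma kexp_eq_nuc:
  assumes c: "composition n"
  shows "kexp n i = nuc n (blk n i) i"
proof -
  let ?a = "blk n i"
  have "prefix_sum n ?a = prefix_sum n (?a - 1) + n ! (?a - 1)"
    using prefix_sum_Suc[of "?a - 1" n] blk_bounds[OF c, of i] by simp
  then have "min (n ! (?a - 1)) (i mod sum_list n - prefix_sum n (?a - 1))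
      = i mod sum_list n - prefix_sum n (?a - 1)"
    using blk_bounds[OF c, of i] by (simp add: min_def)
  then show ?thesis
    using nuc_eq_block_count[OF c blk_in_range[OF c], of i]
    unfolding kexp_def block_count_def by simp
qed

lemma kexp_less_nuc: "composition n \<Longrightarrow> j < m \<Longrightarrow> kexp n j < nuc n (blk n j) m"
  using kexp_eq_nuc[of n j] nuc_Suc[of n "blk n j" j] nuc_mono[of "Suc j" m n "blk n j"] by simp

lemma blk_kexp_inj:
  assumes c: "composition n" and "blk n i = blk n j" "kexp n i = kexp n j"
  shows "i = j"
  using kexp_less_nuc[OF c, of i j] kexp_less_nuc[OF c, of j i] assms
    kexp_eq_nuc[OF c, of i] kexp_eq_nuc[OF c, of j]
  by (metis less_irrefl nat_neq_iff)

lemma ex_index_of_exponent: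
  assumes c: "composition n"
  shows "k < nuc n a m \<Longrightarrow> \<exists>j<m. blk n j = a \<and> kexp n j = k"
proof (induction m)
  case (Suc m)
  show ?case
  proof (cases "k < nuc n a m")
    case True
    then show ?thesis using Suc.IH less_SucI by blast
  next
    case False
    then have "blk n m = a" "k = nuc n a m"
      using Suc.prems nuc_Suc[of n a m] by (auto split: if_splits)
    then show ?thesis using kexp_eq_nuc[OF c, of m] by auto
  qed
qed simp

lemma ball_block_exponents_iff:
  assumes "composition n"
  shows "(\<forall>a\<in>{1..length n}. \<forall>k<nuc n a m. P a k) \<longleftrightarrow> (\<forall>j<m. P (blk n j) (kexp n j))"
  using blk_in_range[OF assms] kexp_less_nuc[OF assms] ex_index_of_exponent[OF assms] by metis


definition coeff_tuple :: "nat list \<Rightarrow> nat \<Rightarrow> (nat \<Rightarrow> real) \<Rightarrow> nat \<Rightarrow> real poly" where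
  "coeff_tuple n l c a = (\<Sum>i\<in>{i. i \<le> l \<and> blk n i = a}. monom (c i) (kexp n i))"

lemma coeff_coeff_tuple:
  "coeff (coeff_tuple n l c a) k = (\<Sum>i\<in>{i. i \<le> l \<and> blk n i = a}. if kexp n i = k then c i else 0)"
  unfolding coeff_tuple_def by (simp add: coeff_sum coeff_monom)

lemma coeff_coeff_tuple_index:
  assumes c: "composition n" and "i \<le> l"
  shows "coeff (coeff_tuple n l e (blk n i)) (kexp n i) = e i"
proof -
  have "{j \<in> {j. j \<le> l \<and> blk n j = blk n i}. kexp n j = kexp n i} = {i}"
    using assms blk_kexp_inj[OF c] by auto
  then show ?thesis
    using sum.inter_filter[of "{j. j \<le> l \<and> blk n j = blk n i}" e "\<lambda>j. kexp n j = kexp n i"]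
    by (simp add: coeff_coeff_tuple)
qed

lemma coeff_coeff_tuple_eq_0:
  "(\<And>i. i \<le> l \<Longrightarrow> blk n i = a \<Longrightarrow> kexp n i \<noteq> k) \<Longrightarrow> coeff (coeff_tuple n l c a) k = 0"
  unfolding coeff_coeff_tuple by (rule sum.neutral) auto

lemma deg_le_coeffI: "(\<And>k. m \<le> k \<Longrightarrow> coeff P k = 0) \<Longrightarrow> deg_le P m"
  unfolding deg_le_def by (metis Suc_eq_plus1 Suc_leI leading_coeff_0_iff not_le)

lemma deg_le_coeff_tuple:
  assumes "composition n"
  shows "deg_le (coeff_tuple n l c a) (nuc n a (Suc l))"
proof (intro deg_le_coeffI coeff_coeff_tuple_eq_0)
  fix k i assume "nuc n a (Suc l) \<le> k" "i \<le> l" "blk n i = a"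
  then show "kexp n i \<noteq> k" using kexp_less_nuc[OF assms, of i "Suc l"] by auto
qed

lemma nuc_Suc_blk: "composition n \<Longrightarrow> nuc n (blk n l) (Suc l) = Suc (kexp n l)"
  using nuc_Suc[of n "blk n l" l] kexp_eq_nuc[of n l] by simp

lemma degree_coeff_tuple_last:
  assumes c: "composition n" and "e l \<noteq> 0"
  shows "degree (coeff_tuple n l e (blk n l)) = kexp n l"
proof (rule antisym)
  show "degree (coeff_tuple n l e (blk n l)) \<le> kexp n l"
    using deg_le_coeff_tuple[OF c, of l e "blk n l"] nuc_Suc_blk[OF c]
    by (auto simp: deg_le_def)
  show "kexp n l \<le> degree (coeff_tuple n l e (blk n l))"
    by (rule le_degree) (simp add: coeff_coeff_tuple_index[OF c] assms)
qed

lemma coeff_tuple_of_coeffs: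
  assumes c: "composition n" and d: "deg_le (A a) (nuc n a (Suc l))"
  shows "coeff_tuple n l (\<lambda>i. coeff (A (blk n i)) (kexp n i)) a = A a"
proof (rule poly_eqI)
  fix k
  show "coeff (coeff_tuple n l (\<lambda>i. coeff (A (blk n i)) (kexp n i)) a) k = coeff (A a) k"
  proof (cases "\<exists>i. i \<le> l \<and> blk n i = a \<and> kexp n i = k")
    case True
    then show ?thesis using coeff_coeff_tuple_index[OF c] by auto
  next
    case False
    then have "nuc n a (Suc l) \<le> k"
      using ex_index_of_exponent[OF c, of k a "Suc l"] by (meson less_Suc_eq_le not_le)
    then have "coeff (A a) k = 0"
      using d unfolding deg_le_def by (auto intro: coeff_eq_0)
    moreover have "coeff (coeff_tuple n l (\<lambda>i. coeff (A (blk n i)) (kexp n i)) a) k = 0"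
      using False by (intro coeff_coeff_tuple_eq_0) auto
    ultimately show ?thesis by simp
  qed
qed

lemma coeff_tuple_cong: "(\<And>i. i \<le> l \<Longrightarrow> c i = c' i) \<Longrightarrow> coeff_tuple n l c a = coeff_tuple n l c' a"
  unfolding coeff_tuple_def by (rule sum.cong) auto

lemma sum_poly_coeff_tuple:
  assumes "composition n"
  shows "(\<Sum>a=1..length n. poly (coeff_tuple n l c a) x * w a x)
       = (\<Sum>i\<le>l. c i * x ^ kexp n i * w (blk n i) x)"
proof -
  have "(\<Sum>a=1..length n. poly (coeff_tuple n l c a) x * w a x)
      = (\<Sum>a=1..length n. \<Sum>i\<in>{i. i \<in> {..l} \<and> blk n i = a}. c i * x ^ kexp n i * w (blk n i) x)"
    unfolding coeff_tuple_def poly_sum poly_monom sum_distrib_right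
    by (intro sum.cong) auto
  also have "\<dots> = (\<Sum>i\<le>l. c i * x ^ kexp n i * w (blk n i) x)"
    by (rule sum.group) (use blk_in_range[OF assms] in auto)
  finally show ?thesis .
qed

lemma integral_sum_poly_coeff_tuple:
  fixes M :: "real measure"
  assumes "composition n"
    and int: "\<And>i. integrable M (\<lambda>x. x ^ kexp n i * w (blk n i) x * f x)"
  shows "(\<integral>x. (\<Sum>a=1..length n. poly (coeff_tuple n l c a) x * w a x) * f x \<partial>M)
       = (\<Sum>i\<le>l. c i * (\<integral>x. x ^ kexp n i * w (blk n i) x * f x \<partial>M))"
proof -
  have "(\<integral>x. (\<Sum>a=1..length n. poly (coeff_tuple n l c a) x * w a x) * f x \<partial>M)
      = (\<integral>x. (\<Sum>i\<le>l. c i * (x ^ kexp n i * w (blk n i) x * f x)) \<partial>M)"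
    unfolding sum_poly_coeff_tuple[OF assms(1)] sum_distrib_right by (simp add: mult.assoc)
  also have "\<dots> = (\<Sum>i\<le>l. c i * (\<integral>x. x ^ kexp n i * w (blk n i) x * f x \<partial>M))"
    using int by simp
  finally show ?thesis .
qed

lemma sum_atMost_last: "(\<Sum>k\<le>(i::nat). f k) = f i + (\<Sum>k<i. f k)"
  using sum.lessThan_Suc[of f i] by (simp add: lessThan_Suc_atMost add.commute)

lemma triangular_solve_unit_vector:
  fixes L :: "nat \<Rightarrow> nat \<Rightarrow> 'a :: comm_ring_1"
  assumes diag: "\<And>i. L i i = 1"
    and solves: "\<And>i. (\<Sum>k\<le>i. L i k * x k) = (if i = m then 1 else 0)"
  shows "\<And>i. i < m \<Longrightarrow> x i = 0" and "x m = 1"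
proof -
  show zero: "x i = 0" if "i < m" for i
    using that
  proof (induction i rule: less_induct)
    case (less i)
    have "(\<Sum>k<i. L i k * x k) = 0" using less by (intro sum.neutral) auto
    then show ?case using solves[of i] less.prems by (simp add: sum_atMost_last diag)
  qed
  have "(\<Sum>k<m. L m k * x k) = 0" using zero by (intro sum.neutral) auto
  then show "x m = 1" using solves[of m] by (simp add: sum_atMost_last diag)
qed

lemma upper_triangular_kernel:
  fixes U :: "nat \<Rightarrow> nat \<Rightarrow> 'a :: idom"
  assumes upper: "\<And>i j. j < i \<Longrightarrow> U i j = 0" and diag: "\<And>i. i < n \<Longrightarrow> U i i \<noteq> 0"
    and kernel: "\<And>i. i < n \<Longrightarrow> (\<Sum>j<n. U i j * e j) = 0"
  shows "i < n \<Longrightarrow> e i = 0"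
proof (induction "n - i" arbitrary: i rule: less_induct)
  case (less i)
  have "(\<Sum>j<n. U i j * e j) = U i i * e i + (\<Sum>j\<in>{..<n} - {i}. U i j * e j)"
    using less.prems by (intro sum.remove) auto
  also have "(\<Sum>j\<in>{..<n} - {i}. U i j * e j) = 0"
  proof (intro sum.neutral ballI)
    fix j assume j: "j \<in> {..<n} - {i}"
    show "U i j * e j = 0"
    proof (cases "j < i")
      case False
      then have "e j = 0" using j less.hyps[of j] by auto
      then show ?thesis by simp
    qed (simp add: upper)
  qed
  finally show ?case using kernel[OF less.prems] diag[OF less.prems] by simp
qed

locale gauss_borel =
  fixes g S Sbar Sbar' :: "nat \<Rightarrow> nat \<Rightarrow> real"
  assumes S_lower: "\<And>i j. i < j \<Longrightarrow> S i j = 0"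
    and S_diag: "\<And>i. S i i = 1"
    and Sbar_upper: "\<And>i j. j < i \<Longrightarrow> Sbar i j = 0"
    and Sbar_diag: "\<And>i. Sbar i i \<noteq> 0"
    and factorization: "\<And>i j. (\<Sum>k\<le>i. S i k * g k j) = Sbar i j"
    and Sbar'_inv: "\<And>i j. (\<Sum>k\<in>{i..j}. Sbar i k * Sbar' k j) = (if i = j then 1 else 0)"
begin

definition S_inv :: "nat \<Rightarrow> nat \<Rightarrow> real" where
  "S_inv i m = (\<Sum>j\<le>m. g i j * Sbar' j m)"

lemma Sbar_Sbar': "(\<Sum>j\<le>m. Sbar i j * Sbar' j m) = (if i = m then 1 else 0)"
proof (cases "i \<le> m")
  case True
  have "(\<Sum>j\<le>m. Sbar i j * Sbar' j m) = (\<Sum>j\<in>{i..m}. Sbar i j * Sbar' j m)"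
    by (rule sum.mono_neutral_right) (auto simp: Sbar_upper)
  then show ?thesis using Sbar'_inv[of i m] by simp
next
  case False
  then show ?thesis by (auto intro: sum.neutral simp: Sbar_upper)
qed

lemma S_S_inv: "(\<Sum>k\<le>i. S i k * S_inv k m) = (if i = m then 1 else 0)"
proof -
  have "(\<Sum>k\<le>i. S i k * S_inv k m) = (\<Sum>j\<le>m. (\<Sum>k\<le>i. S i k * g k j) * Sbar' j m)"
    unfolding S_inv_def sum_distrib_left sum_distrib_right
    by (subst sum.swap) (simp add: mult.assoc)
  then show ?thesis by (simp add: factorization Sbar_Sbar')
qed

lemma S_inv_lower: "i < m \<Longrightarrow> S_inv i m = 0"
  and S_inv_diag: "S_inv m m = 1"
  using triangular_solve_unit_vector[of S "\<lambda>k. S_inv k m" m, OF S_diag S_S_inv] by simp_all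

lemma S_row_orthogonal: "j < l \<Longrightarrow> (\<Sum>i\<le>l. S l i * g i j) = 0"
  by (simp add: factorization Sbar_upper)

lemma Sbar'_column: "i \<le> l \<Longrightarrow> (\<Sum>j\<le>l. g i j * Sbar' j l) = (if i = l then 1 else 0)"
  using S_inv_lower[of i l] S_inv_diag[of l] by (auto simp: S_inv_def)

lemma row_orthogonal_unique:
  assumes last: "d l = 1" and orth: "\<And>j. j < l \<Longrightarrow> (\<Sum>i\<le>l. d i * g i j) = 0"
  shows "i \<le> l \<Longrightarrow> d i = S l i"
proof -
  define e where "e i = d i - S l i" for i
  have e_last: "e l = 0" by (simp add: e_def last S_diag)
  have e_orth: "(\<Sum>i<l. e i * g i j) = 0" if "j < l" for j
  proof -
    have "(\<Sum>i\<le>l. e i * g i j) = (\<Sum>i\<le>l. d i * g i j) - (\<Sum>i\<le>l. S l i * g i j)"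
      by (simp add: e_def left_diff_distrib sum_subtractf)
    then show ?thesis using orth[OF that] S_row_orthogonal[OF that] e_last
      by (simp add: sum_atMost_last)
  qed
  have "(\<Sum>i<l. S_inv i m * e i) = 0" if "m < l" for m
  proof -
    have "(\<Sum>i<l. S_inv i m * e i) = (\<Sum>j\<le>m. (\<Sum>i<l. e i * g i j) * Sbar' j m)"
      unfolding S_inv_def sum_distrib_left sum_distrib_right
      by (subst sum.swap) (simp add: ac_simps)
    also have "\<dots> = 0" using e_orth that by (intro sum.neutral) auto
    finally show ?thesis .
  qed
  then have "e i = 0" if "i < l" for i
    using upper_triangular_kernel[of "\<lambda>m i. S_inv i m" l e] S_inv_lower S_inv_diag that by auto
  then show "i \<le> l \<Longrightarrow> d i = S l i"
    using e_last by (cases "i = l") (auto simp: e_def)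
qed

lemma column_unique:
  assumes col: "\<And>i. i \<le> l \<Longrightarrow> (\<Sum>j\<le>l. g i j * c j) = (if i = l then 1 else 0)"
  shows "j \<le> l \<Longrightarrow> c j = Sbar' j l"
proof -
  define e where "e j = c j - Sbar' j l" for j
  have g_e: "(\<Sum>j\<le>l. g i j * e j) = 0" if "i \<le> l" for i
    using col[OF that] Sbar'_column[OF that]
    by (simp add: e_def right_diff_distrib sum_subtractf)
  have "(\<Sum>j<Suc l. Sbar i j * e j) = 0" if "i < Suc l" for i
  proof -
    have "(\<Sum>j<Suc l. Sbar i j * e j) = (\<Sum>k\<le>i. S i k * (\<Sum>j\<le>l. g k j * e j))"
      unfolding lessThan_Suc_atMost factorization[symmetric] sum_distrib_left sum_distrib_right
      by (subst sum.swap) (simp add: mult.assoc)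
    also have "\<dots> = 0" using g_e that by (intro sum.neutral) auto
    finally show ?thesis .
  qed
  then show "j \<le> l \<Longrightarrow> c j = Sbar' j l"
    using upper_triangular_kernel[of Sbar "Suc l" e j] Sbar_upper Sbar_diag by (simp add: e_def)
qed

end

locale mixed_moments =
  fixes M :: "real measure" and n1 n2 :: "nat list" and w1 w2 :: "nat \<Rightarrow> real \<Rightarrow> real"
  assumes comp1: "composition n1" and comp2: "composition n2"
    and moments_integrable: "\<And>a b k. a \<in> {1..length n1} \<Longrightarrow> b \<in> {1..length n2} \<Longrightarrow>
                              integrable M (\<lambda>x. x ^ k * w1 a x * w2 b x)"
begin

abbreviation g :: "nat \<Rightarrow> nat \<Rightarrow> real" where
  "g \<equiv> moment M n1 n2 w1 w2"

lemma moment_eq_integral: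
  "g i j = (\<integral>x. x ^ kexp n1 i * w1 (blk n1 i) x * (w2 (blk n2 j) x * x ^ kexp n2 j) \<partial>M)"
  unfolding moment_def by (intro Bochner_Integration.integral_cong) (simp_all add: power_add ac_simps)

lemma integrable_moment_integrand:
  "integrable M (\<lambda>x. x ^ kexp n1 i * w1 (blk n1 i) x * (w2 (blk n2 j) x * x ^ kexp n2 j))"
proof -
  have "integrable M (\<lambda>x. x ^ (kexp n1 i + kexp n2 j) * w1 (blk n1 i) x * w2 (blk n2 j) x)"
    using moments_integrable blk_in_range comp1 comp2 by blast
  moreover have "(\<lambda>x. x ^ (kexp n1 i + kexp n2 j) * w1 (blk n1 i) x * w2 (blk n2 j) x)
      = (\<lambda>x. x ^ kexp n1 i * w1 (blk n1 i) x * (w2 (blk n2 j) x * x ^ kexp n2 j))"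
    by (simp add: fun_eq_iff power_add ac_simps)
  ultimately show ?thesis by simp
qed

lemma typeII_pairing:
  "(\<integral>x. (\<Sum>a=1..length n1. poly (coeff_tuple n1 l d a) x * w1 a x) * w2 (blk n2 j) x
      * x ^ kexp n2 j \<partial>M) = (\<Sum>i\<le>l. d i * g i j)"
  using integral_sum_poly_coeff_tuple[OF comp1, where f="\<lambda>x. w2 (blk n2 j) x * x ^ kexp n2 j"
      and w=w1 and M=M and l=l and c=d] integrable_moment_integrand
  by (simp add: moment_eq_integral mult.assoc)

lemma typeI_pairing:
  "(\<integral>x. (\<Sum>b=1..length n2. poly (coeff_tuple n2 l c b) x * w2 b x) * w1 (blk n1 i) x
      * x ^ kexp n1 i \<partial>M) = (\<Sum>j\<le>l. g i j * c j)"
proof -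
  have "integrable M (\<lambda>x. x ^ kexp n2 j * w2 (blk n2 j) x * (w1 (blk n1 i) x * x ^ kexp n1 i))" for j
    using integrable_moment_integrand[of i j] by (simp add: ac_simps)
  moreover have "g i j = (\<integral>x. x ^ kexp n2 j * w2 (blk n2 j) x * (w1 (blk n1 i) x * x ^ kexp n1 i) \<partial>M)"
    for j by (simp add: moment_eq_integral ac_simps)
  ultimately show ?thesis
    using integral_sum_poly_coeff_tuple[OF comp2, where f="\<lambda>x. w1 (blk n1 i) x * x ^ kexp n1 i"
      and w=w2 and M=M and l=l and c=c]
    by (simp add: mult.assoc mult.commute)
qed

lemma typeII_sys_coeff_tuple_iff:
  "typeII_sys M n1 n2 w1 w2 l (coeff_tuple n1 l d)
     \<longleftrightarrow> d l = 1 \<and> (\<forall>j<l. (\<Sum>i\<le>l. d i * g i j) = 0)"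
proof -
  let ?P = "coeff_tuple n1 l d (blk n1 l)"
  have normalized_iff: "degree ?P = nuc n1 (blk n1 l) (Suc l) - 1 \<and> lead_coeff ?P = 1 \<longleftrightarrow> d l = 1"
    using degree_coeff_tuple_last[OF comp1, of d l] coeff_coeff_tuple_index[OF comp1, of l l d]
    by (auto simp: nuc_Suc_blk[OF comp1])
  show ?thesis
    unfolding typeII_sys_def ball_block_exponents_iff[OF comp2] typeII_pairing
    using normalized_iff by (auto simp: deg_le_coeff_tuple[OF comp1])
qed

lemma typeI_sys_coeff_tuple_iff:
  "typeI_sys M n1 n2 w1 w2 l (coeff_tuple n2 l c)
     \<longleftrightarrow> (\<forall>i\<le>l. (\<Sum>j\<le>l. g i j * c j) = (if i = l then 1 else 0))"
  unfolding typeI_sys_def ball_block_exponents_iff[OF comp1] kexp_eq_nuc[OF comp1, symmetric]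
    typeI_pairing
  by (auto simp: deg_le_coeff_tuple[OF comp2] le_less)

lemma typeII_sys_cong:
  assumes "\<And>a. a \<in> {1..length n1} \<Longrightarrow> A a = A' a"
  shows "typeII_sys M n1 n2 w1 w2 l A = typeII_sys M n1 n2 w1 w2 l A'"
proof -
  have "(\<Sum>a=1..length n1. poly (A a) x * w1 a x) = (\<Sum>a=1..length n1. poly (A' a) x * w1 a x)" for x
    using assms by (intro sum.cong) auto
  then show ?thesis
    using assms blk_in_range[OF comp1, of l] unfolding typeII_sys_def by simp
qed

lemma typeI_sys_cong:
  assumes "\<And>b. b \<in> {1..length n2} \<Longrightarrow> B b = B' b"
  shows "typeI_sys M n1 n2 w1 w2 l B = typeI_sys M n1 n2 w1 w2 l B'"
proof -
  have "(\<Sum>b=1..length n2. poly (B b) x * w2 b x) = (\<Sum>b=1..length n2. poly (B' b) x * w2 b x)" for x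
    using assms by (intro sum.cong) auto
  then show ?thesis
    using assms unfolding typeI_sys_def by simp
qed

lemma typeII_sys_obtain_coeff_tuple:
  assumes "typeII_sys M n1 n2 w1 w2 l A"
  obtains d where "\<And>a. a \<in> {1..length n1} \<Longrightarrow> A a = coeff_tuple n1 l d a"
    and "typeII_sys M n1 n2 w1 w2 l (coeff_tuple n1 l d)"
proof
  let ?d = "\<lambda>i. coeff (A (blk n1 i)) (kexp n1 i)"
  show eq: "A a = coeff_tuple n1 l ?d a" if "a \<in> {1..length n1}" for a
    using coeff_tuple_of_coeffs[OF comp1] assms that by (simp add: typeII_sys_def)
  show "typeII_sys M n1 n2 w1 w2 l (coeff_tuple n1 l ?d)"
    using assms typeII_sys_cong[of A "coeff_tuple n1 l ?d" l] eq by simp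
qed

lemma typeI_sys_obtain_coeff_tuple:
  assumes "typeI_sys M n1 n2 w1 w2 l B"
  obtains c where "\<And>b. b \<in> {1..length n2} \<Longrightarrow> B b = coeff_tuple n2 l c b"
    and "typeI_sys M n1 n2 w1 w2 l (coeff_tuple n2 l c)"
proof
  let ?c = "\<lambda>j. coeff (B (blk n2 j)) (kexp n2 j)"
  show eq: "B b = coeff_tuple n2 l ?c b" if "b \<in> {1..length n2}" for b
    using coeff_tuple_of_coeffs[OF comp2] assms that by (simp add: typeI_sys_def)
  show "typeI_sys M n1 n2 w1 w2 l (coeff_tuple n2 l ?c)"
    using assms typeI_sys_cong[of B "coeff_tuple n2 l ?c" l] eq by simp
qed

end

theorem proposition2p3:
  fixes M :: "real measure" and \<Delta> :: "real set"
    and n1 n2 :: "nat list"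
    and w1 w2 :: "nat \<Rightarrow> real \<Rightarrow> real"
    and S Sbar Sbar' :: "nat \<Rightarrow> nat \<Rightarrow> real"
    and l :: nat
  assumes interval: "is_interval \<Delta>"
    and sets_M: "sets M = sets borel"
    and finite_M: "finite_measure M"
    and conc: "emeasure M (UNIV - \<Delta>) = 0"
    and supp: "infinite (measure_support M)"
    and comp1: "composition n1" and comp2: "composition n2"
    and w1_meas: "\<And>a. a \<in> {1..length n1} \<Longrightarrow> w1 a \<in> borel_measurable borel"
    and w2_meas: "\<And>b. b \<in> {1..length n2} \<Longrightarrow> w2 b \<in> borel_measurable borel"
    and w1_int: "\<And>a. a \<in> {1..length n1} \<Longrightarrow> integrable M (w1 a)"
    and w2_int: "\<And>b. b \<in> {1..length n2} \<Longrightarrow> integrable M (w2 b)"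
    and w1_sign: "\<And>a. a \<in> {1..length n1} \<Longrightarrow> not_changing_sign \<Delta> (w1 a)"
    and w2_sign: "\<And>b. b \<in> {1..length n2} \<Longrightarrow> not_changing_sign \<Delta> (w2 b)"
    and moments_fin: "\<And>a b k. a \<in> {1..length n1} \<Longrightarrow> b \<in> {1..length n2} \<Longrightarrow>
                         integrable M (\<lambda>x. x ^ k * w1 a x * w2 b x)"
    and perf: "perfect M (length n1) (length n2) w1 w2"
    and S_lower: "\<And>i j. i < j \<Longrightarrow> S i j = 0"
    and S_diag: "\<And>i. S i i = 1"
    and Sbar_upper: "\<And>i j. j < i \<Longrightarrow> Sbar i j = 0"
    and Sbar_diag: "\<And>i. Sbar i i \<noteq> 0"
    and GB: "\<And>i j. (\<Sum>k\<le>i. S i k * moment M n1 n2 w1 w2 k j) = Sbar i j"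
    and Sbar'_upper: "\<And>i j. j < i \<Longrightarrow> Sbar' i j = 0"
    and Sbar'_inv: "\<And>i j. (\<Sum>k\<in>{i..j}. Sbar i k * Sbar' k j) = (if i = j then 1 else 0)"
  shows
    "typeII_sys M n1 n2 w1 w2 l
        (\<lambda>a. \<Sum>i\<in>{i. i \<le> l \<and> blk n1 i = a}. monom (S l i) (kexp n1 i))
     \<and> (\<forall>A. typeII_sys M n1 n2 w1 w2 l A \<longrightarrow>
           (\<forall>a\<in>{1..length n1}.
              A a = (\<Sum>i\<in>{i. i \<le> l \<and> blk n1 i = a}. monom (S l i) (kexp n1 i))))
     \<and> typeI_sys M n1 n2 w1 w2 l
        (\<lambda>b. \<Sum>j\<in>{j. j \<le> l \<and> blk n2 j = b}. monom (Sbar' j l) (kexp n2 j))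
     \<and> (\<forall>B. typeI_sys M n1 n2 w1 w2 l B \<longrightarrow>
           (\<forall>b\<in>{1..length n2}.
              B b = (\<Sum>j\<in>{j. j \<le> l \<and> blk n2 j = b}. monom (Sbar' j l) (kexp n2 j))))"
proof -
  interpret mixed_moments M n1 n2 w1 w2
    using comp1 comp2 moments_fin by unfold_locales
  interpret gauss_borel g S Sbar Sbar'
    using S_lower S_diag Sbar_upper Sbar_diag GB Sbar'_inv by unfold_locales
  have typeII: "typeII_sys M n1 n2 w1 w2 l (coeff_tuple n1 l (S l))"
    using S_diag S_row_orthogonal by (simp add: typeII_sys_coeff_tuple_iff)
  have typeII_unique: "A a = coeff_tuple n1 l (S l) a"
    if A: "typeII_sys M n1 n2 w1 w2 l A" and a: "a \<in> {1..length n1}" for A a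
  proof -
    obtain d where A_eq: "A a = coeff_tuple n1 l d a"
      and d: "typeII_sys M n1 n2 w1 w2 l (coeff_tuple n1 l d)"
      using typeII_sys_obtain_coeff_tuple[OF A] a by metis
    have "d i = S l i" if "i \<le> l" for i
      using d that row_orthogonal_unique unfolding typeII_sys_coeff_tuple_iff by blast
    then show ?thesis
      unfolding A_eq by (rule coeff_tuple_cong)
  qed
  have typeI: "typeI_sys M n1 n2 w1 w2 l (coeff_tuple n2 l (\<lambda>j. Sbar' j l))"
    using Sbar'_column by (simp add: typeI_sys_coeff_tuple_iff)
  have typeI_unique: "B b = coeff_tuple n2 l (\<lambda>j. Sbar' j l) b"
    if B: "typeI_sys M n1 n2 w1 w2 l B" and b: "b \<in> {1..length n2}" for B b
  proof -
    obtain c where B_eq: "B b = coeff_tuple n2 l c b"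
      and c: "typeI_sys M n1 n2 w1 w2 l (coeff_tuple n2 l c)"
      using typeI_sys_obtain_coeff_tuple[OF B] b by metis
    have "c j = Sbar' j l" if "j \<le> l" for j
      using c that column_unique unfolding typeI_sys_coeff_tuple_iff by blast
    then show ?thesis
      unfolding B_eq by (rule coeff_tuple_cong)
  qed
  show ?thesis
    unfolding coeff_tuple_def[symmetric] using typeII typeII_unique typeI typeI_unique by blast
qed

end
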